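(* Let $m\ge3$ be odd, let $s\ge2$ be even but not divisible by $4$, $n=sm$, and $\Gamma=C_n[mK_1]$. Let $\eta_1=(t,t,\dots,t)r$, $\eta_2=(\gamma_1,\dots,\gamma_n)z$ with $\gamma_{2i+1}=\gamma_{2i+2}=tc^{i}$ for $0\le i<n/2$, and $H=\langle\eta_1,\eta_2\rangle$. Then $\Gamma$ is the skeleton of a polytopal orientable reflexible map $\mathcal M$ of type $\{n,2m\}$ with $\mathrm{Aut}^+(\mathcal M)=H$.
   Context: $C_n[mK_1]$ is the graph with vertex set $\{1,\dots,n\}\times\{1,\dots,m\}$ in which $(i_1,j_1)$ is adjacent to $(i_2,j_2)$ if and only if $i_1\equiv i_2\pm1\pmod n$ (residues mod $n$ taken in $\{1,\dots,n\}$). Permutations act on the right ($x\alpha$ is the image of $x$) and products are composed left to right, both in $S_m$ and in $\mathrm{Aut}(\Gamma)$. For $\alpha_1,\dots,\alpha_n\in S_m$ and a permutation $x$ of $\{1,\dots,n\}$ in the dihedral group $D_n=\langle r,z\rangle$, $(\alpha_1,\dots,\alpha_n)x$ denotes the automorphism of $\Gamma$ mapping $(i,j)\mapsto(ix,\,j\alpha_i)$; $1$ denotes an identity permutation. Here $c=(1\,2\,\cdots\,m)\in S_m$; $t\in S_m$ fixes $1$ and maps $j\mapsto m-j+2$ for $2\le j\le m$; $r$ is the permutation $i\mapsto i+1 \pmod n$ of $\{1,\dots,n\}$; and $z$ fixes $1$ and maps $j\mapsto n-j+2$ for $2\le j\le n$. A map is a finite connected graph (its skeleton), viewed as a 1-dimensional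 CW complex, embedded in a closed surface so that every connected component of the complement (a face) is homeomorphic to an open disk. The map is polytopal if the boundary of each face is a cycle of the skeleton and every edge lies on the boundary of exactly two distinct faces. An automorphism of a map is an automorphism of the skeleton that extends to a homeomorphism of the surface; these form the group $\mathrm{Aut}(\mathcal M)$. A map is rotary if the stabiliser of each vertex contains a cyclic group acting transitively on the edges incident to it, and the stabiliser of each face contains a cyclic group acting transitively on the vertices (and edges) of the face; it has type $\{p,q\}$ if each face has $p$ edges on its boundary and the skeleton is $q$-valent. A rotary map is reflexible if the stabiliser of a face also contains an automorphism acting as a reflection of that face; a reflexible map is orientable or non-orientable according to its surface. For a polytopal rotary map and a flag (incident vertex–edge–face triple) $\Phi=(v,e,f)$, distinguished generators are automorphisms $\sigma_1,\sigma_2$ such that $\sigma_1$ preserves $f$ and acts as a one-step rotation of its boundary cycle, $\sigma_2$ fixes $v$ and acts as a one-step rotation of the edges around $v$, and $\sigma_1\sigma_2$ is an involution reversing $e$; the rotational group is $\mathrm{Aut}^+(\mathcal M)=\langle\sigma_1,\sigma_2\rangle$. *)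

theory Defs
  imports Main
begin

(* Combinatorial model: orientable maps with skeleton Gamma = C_n[mK_1] are given by
   rotation systems on the darts of Gamma (Heffter-Edmonds). Vertices are pairs (i,j). *)

type_synonym vtx = "nat \<times> nat"
type_synonym dart = "vtx \<times> vtx"

definition Vs :: "nat \<Rightarrow> nat \<Rightarrow> vtx set" where
  "Vs n m = {1..n} \<times> {1..m}"

definition adj :: "nat \<Rightarrow> nat \<Rightarrow> vtx \<Rightarrow> vtx \<Rightarrow> bool" where
  "adj n m x y \<longleftrightarrow> x \<in> Vs n m \<and> y \<in> Vs n m \<and>
     (fst x mod n = (fst y + 1) mod n \<or> (fst x + 1) mod n = fst y mod n)"

definition darts :: "nat \<Rightarrow> nat \<Rightarrow> dart set" where
  "darts n m = {(x, y). adj n m x y}"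

definition rev_dart :: "dart \<Rightarrow> dart" where
  "rev_dart d = (snd d, fst d)"

definition rotation_system :: "nat \<Rightarrow> nat \<Rightarrow> (dart \<Rightarrow> dart) \<Rightarrow> bool" where
  "rotation_system n m rho \<longleftrightarrow>
     bij_betw rho (darts n m) (darts n m) \<and>
     (\<forall>d\<in>darts n m. fst (rho d) = fst d) \<and>
     (\<forall>d\<in>darts n m. \<forall>d'\<in>darts n m. fst d = fst d' \<longrightarrow> (\<exists>k. (rho ^^ k) d = d'))"

(* face successor: traverse the dart, then turn *)
definition phi :: "(dart \<Rightarrow> dart) \<Rightarrow> dart \<Rightarrow> dart" where
  "phi rho d = rho (rev_dart d)"

(* a face is identified with the cyclically ordered set of darts of its boundary walk *)
definition face :: "(dart \<Rightarrow> dart) \<Rightarrow> dart \<Rightarrow> dart set" where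
  "face rho d = {(phi rho ^^ k) d | k. True}"

definition faces :: "nat \<Rightarrow> nat \<Rightarrow> (dart \<Rightarrow> dart) \<Rightarrow> dart set set" where
  "faces n m rho = face rho ` darts n m"

definition polytopal :: "nat \<Rightarrow> nat \<Rightarrow> (dart \<Rightarrow> dart) \<Rightarrow> bool" where
  "polytopal n m rho \<longleftrightarrow>
     (\<forall>F\<in>faces n m rho. inj_on fst F \<and> card F \<ge> 3) \<and>
     (\<forall>d\<in>darts n m. face rho d \<noteq> face rho (rev_dart d))"

definition map_type :: "nat \<Rightarrow> nat \<Rightarrow> (dart \<Rightarrow> dart) \<Rightarrow> nat \<Rightarrow> nat \<Rightarrow> bool" where
  "map_type n m rho p q \<longleftrightarrow>
     (\<forall>F\<in>faces n m rho. card F = p) \<and> (\<forall>x\<in>Vs n m. card {y. adj n m x y} = q)"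

definition gd :: "(vtx \<Rightarrow> vtx) \<Rightarrow> dart \<Rightarrow> dart" where
  "gd g d = (g (fst d), g (snd d))"

definition orient_pres :: "nat \<Rightarrow> nat \<Rightarrow> (dart \<Rightarrow> dart) \<Rightarrow> (vtx \<Rightarrow> vtx) \<Rightarrow> bool" where
  "orient_pres n m rho g \<longleftrightarrow> (\<forall>d\<in>darts n m. rho (gd g d) = gd g (rho d))"

definition orient_rev :: "nat \<Rightarrow> nat \<Rightarrow> (dart \<Rightarrow> dart) \<Rightarrow> (vtx \<Rightarrow> vtx) \<Rightarrow> bool" where
  "orient_rev n m rho g \<longleftrightarrow> (\<forall>d\<in>darts n m. rho (gd g (rho d)) = gd g d)"

(* automorphism of the map: skeleton automorphism (identity off the vertex set)
   extending to a homeomorphism, i.e. preserving or reversing the rotation *)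
definition map_aut :: "nat \<Rightarrow> nat \<Rightarrow> (dart \<Rightarrow> dart) \<Rightarrow> (vtx \<Rightarrow> vtx) \<Rightarrow> bool" where
  "map_aut n m rho g \<longleftrightarrow>
     (\<forall>x. x \<notin> Vs n m \<longrightarrow> g x = x) \<and> bij_betw g (Vs n m) (Vs n m) \<and>
     (\<forall>x y. adj n m x y \<longleftrightarrow> adj n m (g x) (g y)) \<and>
     (orient_pres n m rho g \<or> orient_rev n m rho g)"

definition face_image :: "nat \<Rightarrow> nat \<Rightarrow> (dart \<Rightarrow> dart) \<Rightarrow> (vtx \<Rightarrow> vtx) \<Rightarrow> dart set \<Rightarrow> dart set" where
  "face_image n m rho g F =
     (if orient_pres n m rho g then gd g ` F else rev_dart ` gd g ` F)"

definition rotary :: "nat \<Rightarrow> nat \<Rightarrow> (dart \<Rightarrow> dart) \<Rightarrow> bool" where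
  "rotary n m rho \<longleftrightarrow>
     (\<forall>v\<in>Vs n m. \<exists>g. map_aut n m rho g \<and> g v = v \<and>
        (\<forall>w w'. adj n m v w \<longrightarrow> adj n m v w' \<longrightarrow> (\<exists>k. (g ^^ k) w = w'))) \<and>
     (\<forall>F\<in>faces n m rho. \<exists>g. map_aut n m rho g \<and> face_image n m rho g F = F \<and>
        (\<forall>x\<in>fst ` F. \<forall>y\<in>fst ` F. \<exists>k. (g ^^ k) x = y) \<and>
        (\<forall>d\<in>F. \<forall>d'\<in>F. \<exists>k. {(g ^^ k) (fst d), (g ^^ k) (snd d)} = {fst d', snd d'}))"

definition reflexible :: "nat \<Rightarrow> nat \<Rightarrow> (dart \<Rightarrow> dart) \<Rightarrow> bool" where
  "reflexible n m rho \<longleftrightarrow> rotary n m rho \<and>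
     (\<forall>F\<in>faces n m rho. \<exists>g. map_aut n m rho g \<and> face_image n m rho g F = F \<and>
        (\<forall>d\<in>F. rev_dart (gd g d) \<in> F))"

definition is_flag :: "nat \<Rightarrow> nat \<Rightarrow> (dart \<Rightarrow> dart) \<Rightarrow> vtx \<Rightarrow> vtx \<Rightarrow> dart set \<Rightarrow> bool" where
  "is_flag n m rho v w F \<longleftrightarrow> adj n m v w \<and> F \<in> faces n m rho \<and> ((v, w) \<in> F \<or> (w, v) \<in> F)"

(* distinguished generators for the flag (v, edge {v,w}, F); products left to right,
   so sigma1 sigma2 is the map sigma2 o sigma1 *)
definition distinguished ::
  "nat \<Rightarrow> nat \<Rightarrow> (dart \<Rightarrow> dart) \<Rightarrow> vtx \<Rightarrow> vtx \<Rightarrow> dart set \<Rightarrow> (vtx \<Rightarrow> vtx) \<Rightarrow> (vtx \<Rightarrow> vtx) \<Rightarrow> bool" where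
  "distinguished n m rho v w F s1 s2 \<longleftrightarrow>
     map_aut n m rho s1 \<and> map_aut n m rho s2 \<and>
     face_image n m rho s1 F = F \<and>
     ((\<forall>d\<in>F. s1 (fst d) = fst (phi rho d)) \<or> (\<forall>d\<in>F. s1 (fst (phi rho d)) = fst d)) \<and>
     s2 v = v \<and>
     ((\<forall>d\<in>darts n m. fst d = v \<longrightarrow> s2 (snd d) = snd (rho d)) \<or>
      (\<forall>d\<in>darts n m. fst d = v \<longrightarrow> s2 (snd (rho d)) = snd d)) \<and>
     (s2 \<circ> s1) v = w \<and> (s2 \<circ> s1) w = v \<and> (\<forall>x. (s2 \<circ> s1) ((s2 \<circ> s1) x) = x)"

inductive_set gen_grp :: "(vtx \<Rightarrow> vtx) set \<Rightarrow> (vtx \<Rightarrow> vtx) set" for S where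
  gen_id: "id \<in> gen_grp S"
| gen_gen: "s \<in> S \<Longrightarrow> s \<in> gen_grp S"
| gen_comp: "f \<in> gen_grp S \<Longrightarrow> g \<in> gen_grp S \<Longrightarrow> f \<circ> g \<in> gen_grp S"
| gen_inv: "f \<in> gen_grp S \<Longrightarrow> inv f \<in> gen_grp S"

definition cperm :: "nat \<Rightarrow> nat \<Rightarrow> nat" where "cperm m j = j mod m + 1"
definition tperm :: "nat \<Rightarrow> nat \<Rightarrow> nat" where "tperm m j = (if j = 1 then 1 else m - j + 2)"
definition rperm :: "nat \<Rightarrow> nat \<Rightarrow> nat" where "rperm n i = i mod n + 1"
definition zperm :: "nat \<Rightarrow> nat \<Rightarrow> nat" where "zperm n i = (if i = 1 then 1 else n - i + 2)"

(* gamma_k = t c^i for k = 2i+1, 2i+2; left-to-right product: apply t, then c^i *)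
definition gamma :: "nat \<Rightarrow> nat \<Rightarrow> nat \<Rightarrow> nat" where
  "gamma m k = (cperm m ^^ ((k - 1) div 2)) \<circ> tperm m"

definition eta1 :: "nat \<Rightarrow> nat \<Rightarrow> vtx \<Rightarrow> vtx" where
  "eta1 n m x = (if x \<in> Vs n m then (rperm n (fst x), tperm m (snd x)) else x)"

definition eta2 :: "nat \<Rightarrow> nat \<Rightarrow> vtx \<Rightarrow> vtx" where
  "eta2 n m x = (if x \<in> Vs n m then (zperm n (fst x), gamma m (fst x) (snd x)) else x)"

end

(* Write the vertex (i, j) of C_n[mK_1] as vert I J, where I = i - 1 is read modulo n (the layer
   on the cycle) and J = j - 1 modulo m (the position in the layer).  The rotation rot at vert I J
   sends the dart towards vert (I + 1) K to the dart towards vert (I - 1) (2 J - K), and the dart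
   towards vert (I - 1) K to the dart towards vert (I + 1) (2 J + alt_sign I - K).  Two steps shift
   K by alt_sign I = +-1, so the 2 m darts at a vertex form a single cycle.
   A face boundary is then a walk I |-> vert I (f I) whose fibre coordinate has second difference
   alt_sign I or 0, i.e. f I = I div 2 + a I + b or f I = a I + b.  As 2 m divides n, such a walk
   closes up after exactly n steps through n distinct layers, so every face is an n-gon.
   The maps (I, J) |-> (a + e I, s J + t (I div 2) + alpha I + beta) with e, s = +-1 are graph
   automorphisms; suitable ones commute with rot and rotate a given face or vertex star by one
   step, others reverse rot and reflect a given face.  In these coordinates eta1 is the one-step
   rotation of the face through vert 0 0 and vert (-1) 0, and eta2 is the rotation at vert 0 0. *)

theory Submission
  imports Defs
begin

definition alt_sign :: "int \<Rightarrow> int" where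
  "alt_sign I = (if even I then -1 else 1)"

lemma div2_add_succ_div2: "(I::int) div 2 + (I + 1) div 2 = I"
  by (cases "even I") (auto elim!: evenE oddE)

lemma uminus_div2: "(- I) div 2 = (I::int) div 2 - I"
  by (cases "even I") (auto elim!: evenE oddE)

lemma second_difference_div2: "((I::int) + 1) div 2 - 2 * (I div 2) + (I - 1) div 2 = alt_sign I"
  by (cases "even I") (auto elim!: evenE oddE simp: alt_sign_def)

lemma alt_sign_odd_add: "odd a \<Longrightarrow> alt_sign (a + I) = - alt_sign I"
  by (auto simp: alt_sign_def)

lemma alt_sign_even_diff: "even a \<Longrightarrow> alt_sign (a - I) = alt_sign I"
  by (auto simp: alt_sign_def)

lemma alt_sign_uminus: "alt_sign (- I) = alt_sign I"
  by (simp add: alt_sign_def)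

lemma is_unit_alt_sign: "is_unit (alt_sign I)"
  by (simp add: alt_sign_def)

lemma alt_sign_cong: "even N \<Longrightarrow> N dvd I - I' \<Longrightarrow> alt_sign I = alt_sign I'"
  unfolding alt_sign_def by (metis dvd_trans even_diff even_add)

lemma mod_minus_self_dvd: "(N::int) dvd X mod N - X"
  using mod_eq_dvd_iff[of "X mod N" N X] by simp

lemma dvd_mod_diff_iff: "(N::int) dvd X mod N - Y mod N - c \<longleftrightarrow> N dvd X - Y - c"
proof -
  have "N dvd (X mod N - X) - (Y mod N - Y)"
    by (intro dvd_diff mod_minus_self_dvd)
  moreover have "X mod N - Y mod N - c = (X mod N - X) - (Y mod N - Y) + (X - Y - c)"
    by simp
  ultimately show ?thesis
    by (metis dvd_add_right_iff)
qed

lemma unit_steps_reach_mod: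
  fixes N \<delta> :: int
  assumes "0 < N" and "is_unit \<delta>"
  shows "\<exists>k::nat. N dvd I + int k * \<delta> - I'"
proof
  define x where "x = (I' - I) * \<delta>"
  have x\<delta>: "x * \<delta> = I' - I"
    using assms(2) abs_mult_self_eq[of \<delta>] by (simp add: x_def mult.assoc)
  have mod_x: "int (nat (x mod N)) = x - N * (x div N)"
    using assms(1) by (simp add: minus_mult_div_eq_mod)
  have "I + int (nat (x mod N)) * \<delta> - I' = x * \<delta> - (I' - I) - N * ((x div N) * \<delta>)"
    unfolding mod_x by (simp add: algebra_simps)
  also have "\<dots> = N * (- (x div N) * \<delta>)"
    using x\<delta> by simp
  finally show "N dvd I + int (nat (x mod N)) * \<delta> - I'" by simp
qed

lemma reflection_perm_eq_mod:
  assumes "1 \<le> j" "j \<le> M"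
  shows "(if j = 1 then 1 else M - j + 2) = nat ((1 - int j) mod int M) + 1"
proof (cases "j = 1")
  case False
  have "(1 - int j) mod int M = (1 - int j + int M) mod int M"
    by simp
  also have "\<dots> = 1 - int j + int M"
    using assms False by (intro mod_pos_pos_trivial) simp_all
  finally show ?thesis using False assms by simp
qed simp

definition cyc_coord :: "vtx \<Rightarrow> int" where
  "cyc_coord x = int (fst x) - 1"

definition fib_coord :: "vtx \<Rightarrow> int" where
  "fib_coord x = int (snd x) - 1"

locale lex_cycle =
  fixes n m :: nat
  assumes m_ge_3: "3 \<le> m" and n_pos: "0 < n" and double_m_dvd_n: "2 * m dvd n"
begin

lemma m_pos: "0 < m"
  using m_ge_3 by simp

lemma n_ge_6: "6 \<le> n"
  using dvd_imp_le[OF double_m_dvd_n n_pos] m_ge_3 by linarith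

lemma even_n: "even n"
  using double_m_dvd_n by (metis dvd_mult_left)

lemma m_dvd_half_n: "int m dvd int n div 2"
  using double_m_dvd_n by (auto simp: of_nat_div)

lemma not_n_dvd_2: "\<not> int n dvd 2"
  using n_ge_6 by (auto dest!: zdvd_imp_le)

definition vert :: "int \<Rightarrow> int \<Rightarrow> vtx" where
  "vert I J = (nat (I mod int n) + 1, nat (J mod int m) + 1)"

lemma vert_eq_iff: "vert I J = vert I' J' \<longleftrightarrow> int n dvd I - I' \<and> int m dvd J - J'"
  using n_pos m_pos by (simp add: vert_def eq_nat_nat_iff mod_eq_dvd_iff)

lemma vert_cong: "int n dvd I - I' \<Longrightarrow> int m dvd J - J' \<Longrightarrow> vert I J = vert I' J'"
  by (simp add: vert_eq_iff)

lemma vert_in_Vs: "vert I J \<in> Vs n m"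
  using n_pos m_pos by (auto simp: vert_def Vs_def nat_le_iff nat_less_iff Suc_le_eq)

lemma cyc_coord_vert: "cyc_coord (vert I J) = I mod int n"
  using n_pos by (simp add: vert_def cyc_coord_def)

lemma fib_coord_vert: "fib_coord (vert I J) = J mod int m"
  using m_pos by (simp add: vert_def fib_coord_def)

lemma vert_coords: "x \<in> Vs n m \<Longrightarrow> vert (cyc_coord x) (fib_coord x) = x"
  by (cases x) (auto simp: Vs_def vert_def cyc_coord_def fib_coord_def)

lemma obtain_vert:
  assumes "x \<in> Vs n m"
  obtains I J where "x = vert I J"
  using vert_coords[OF assms] by metis

lemma adj_vert_iff: "adj n m (vert I J) (vert I' J') \<longleftrightarrow> int n dvd I' - I - 1 \<or> int n dvd I' - I + 1"
proof -
  have nat_mod_iff: "a mod n = b mod n \<longleftrightarrow> int n dvd int a - int b" for a b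
    by (metis mod_eq_dvd_iff of_nat_eq_iff zmod_int)
  have fst_vert: "int (fst (vert X Y)) = X mod int n + 1" for X Y
    using n_pos by (simp add: vert_def)
  have flip: "int n dvd I - I' - c \<longleftrightarrow> int n dvd I' - I + c" for c
    using dvd_minus_iff[of "int n" "I - I' - c"] by (simp add: algebra_simps)
  have "int (fst (vert I J)) - int (fst (vert I' J') + 1) = I mod int n - I' mod int n - 1"
    "int (fst (vert I J) + 1) - int (fst (vert I' J')) = I mod int n - I' mod int n - (- 1)"
    by (simp_all add: fst_vert)
  then have "fst (vert I J) mod n = (fst (vert I' J') + 1) mod n \<longleftrightarrow> int n dvd I' - I + 1"
    "(fst (vert I J) + 1) mod n = fst (vert I' J') mod n \<longleftrightarrow> int n dvd I' - I - 1"
    using flip[of 1] flip[of "- 1"] by (simp_all only: nat_mod_iff dvd_mod_diff_iff) simp_all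
  then show ?thesis
    using vert_in_Vs by (auto simp: adj_def)
qed

lemma forward_dart: "(vert I J, vert (I + 1) K) \<in> darts n m"
  by (simp add: darts_def adj_vert_iff)

lemma backward_dart: "(vert I J, vert (I - 1) K) \<in> darts n m"
  by (simp add: darts_def adj_vert_iff)

lemma darts_at_cases:
  assumes "d \<in> darts n m" and "fst d = vert I J"
  obtains K where "d = (vert I J, vert (I + 1) K)" | K where "d = (vert I J, vert (I - 1) K)"
proof -
  obtain y where d: "d = (vert I J, y)" and adj: "adj n m (vert I J) y"
    using assms by (cases d) (auto simp: darts_def)
  then obtain I' K where y: "y = vert I' K"
    by (meson adj_def obtain_vert)
  from adj have "int n dvd I' - I - 1 \<or> int n dvd I' - I + 1"
    by (simp add: y adj_vert_iff)
  then show ?thesis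
  proof
    assume "int n dvd I' - I - 1"
    then have "y = vert (I + 1) K" by (simp add: y vert_eq_iff algebra_simps)
    then show ?thesis using that(1) d by simp
  next
    assume "int n dvd I' - I + 1"
    then have "y = vert (I - 1) K" by (simp add: y vert_eq_iff algebra_simps)
    then show ?thesis using that(2) d by simp
  qed
qed

lemma darts_cases:
  assumes "d \<in> darts n m"
  obtains I J K where "d = (vert I J, vert (I + 1) K)" | I J K where "d = (vert I J, vert (I - 1) K)"
proof -
  have "fst d \<in> Vs n m" using assms by (auto simp: darts_def adj_def)
  then obtain I J where "fst d = vert I J" by (rule obtain_vert)
  with assms show ?thesis using that by (cases rule: darts_at_cases) blast+
qed

lemma finite_darts: "finite (darts n m)"
proof -
  have "darts n m \<subseteq> Vs n m \<times> Vs n m" by (auto simp: darts_def adj_def)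
  then show ?thesis by (rule finite_subset) (simp add: Vs_def)
qed

definition rot :: "dart \<Rightarrow> dart" where
  "rot d = (let I = cyc_coord (fst d); J = fib_coord (fst d); K = fib_coord (snd d) in
     if int n dvd cyc_coord (snd d) - I - 1 then (fst d, vert (I - 1) (2 * J - K))
     else (fst d, vert (I + 1) (2 * J + alt_sign I - K)))"

lemma rot_vert:
  "rot (vert I J, vert I' K) =
     (if int n dvd I' - I - 1 then (vert I J, vert (I - 1) (2 * J - K))
      else (vert I J, vert (I + 1) (2 * J + alt_sign I - K)))"
proof -
  have J: "int m dvd J mod int m - J" and K: "int m dvd K mod int m - K"
    by (rule mod_minus_self_dvd)+
  have "int m dvd 2 * (J mod int m - J) - (K mod int m - K)"
    by (rule dvd_diff[OF dvd_mult[OF J] K])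
  then have backward: "vert (I mod int n - 1) (2 * (J mod int m) - K mod int m) = vert (I - 1) (2 * J - K)"
    by (intro vert_cong) (simp_all add: mod_minus_self_dvd algebra_simps)
  have "alt_sign (I mod int n) = alt_sign I"
    using even_n by (intro alt_sign_cong[of "int n"]) (simp_all add: mod_minus_self_dvd)
  with \<open>int m dvd 2 * (J mod int m - J) - (K mod int m - K)\<close>
  have forward: "vert (I mod int n + 1) (2 * (J mod int m) + alt_sign (I mod int n) - K mod int m)
      = vert (I + 1) (2 * J + alt_sign I - K)"
    by (intro vert_cong) (simp_all add: mod_minus_self_dvd algebra_simps)
  show ?thesis
    by (simp add: rot_def Let_def cyc_coord_vert fib_coord_vert dvd_mod_diff_iff backward forward)
qed

lemma rot_forward:
  "int n dvd I' - I - 1 \<Longrightarrow> rot (vert I J, vert I' K) = (vert I J, vert (I - 1) (2 * J - K))"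
  by (simp add: rot_vert)

lemma rot_backward:
  assumes "int n dvd I' - I + 1"
  shows "rot (vert I J, vert I' K) = (vert I J, vert (I + 1) (2 * J + alt_sign I - K))"
proof -
  have "\<not> int n dvd I' - I - 1"
    using assms not_n_dvd_2 dvd_diff[of "int n" "I' - I + 1" "I' - I - 1"] by auto
  then show ?thesis by (simp add: rot_vert)
qed

lemma rot_in_darts: "d \<in> darts n m \<Longrightarrow> rot d \<in> darts n m"
  by (erule darts_cases) (simp_all add: rot_forward rot_backward forward_dart backward_dart)

lemma funpow_rot_in_darts: "d \<in> darts n m \<Longrightarrow> (rot ^^ k) d \<in> darts n m"
  by (induction k) (simp_all add: rot_in_darts)

lemma fst_rot: "d \<in> darts n m \<Longrightarrow> fst (rot d) = fst d"
  by (erule darts_cases) (simp_all add: rot_forward rot_backward)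

lemma funpow_rot_forward:
  "(rot ^^ (2 * k)) (vert I J, vert (I + 1) K) = (vert I J, vert (I + 1) (K + int k * alt_sign I))"
proof (induction k)
  case (Suc k)
  have "(rot ^^ (2 * Suc k)) (vert I J, vert (I + 1) K)
      = rot (rot (vert I J, vert (I + 1) (K + int k * alt_sign I)))"
    using Suc by simp
  also have "\<dots> = (vert I J, vert (I + 1) (K + int (Suc k) * alt_sign I))"
    by (simp add: rot_forward rot_backward algebra_simps)
  finally show ?case .
qed simp

lemma forward_dart_orbit: "\<exists>k. (rot ^^ k) (vert I J, vert (I + 1) K) = (vert I J, vert (I + 1) K')"
proof -
  obtain k where "int m dvd K + int k * alt_sign I - K'"
    using unit_steps_reach_mod[OF _ is_unit_alt_sign] m_pos by (metis of_nat_0_less_iff)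
  then have "(rot ^^ (2 * k)) (vert I J, vert (I + 1) K) = (vert I J, vert (I + 1) K')"
    by (simp add: funpow_rot_forward vert_eq_iff)
  then show ?thesis by blast
qed

lemma rot_orbit:
  assumes d: "d \<in> darts n m" and d': "d' \<in> darts n m" and same_vertex: "fst d = fst d'"
  shows "\<exists>k. (rot ^^ k) d = d'"
proof -
  have "fst d \<in> Vs n m" using d by (auto simp: darts_def adj_def)
  then obtain I J where v: "fst d = vert I J" by (rule obtain_vert)
  obtain k0 K where k0: "(rot ^^ k0) d = (vert I J, vert (I + 1) K)"
  proof (cases rule: darts_at_cases[OF d v])
    case (1 K)
    then show ?thesis using that[of 0] by simp
  next
    case (2 K)
    then show ?thesis using that[of 1] by (simp add: rot_backward)
  qed
  have v': "fst d' = vert I J" using v same_vertex by simp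
  have "\<exists>k. (rot ^^ k) (vert I J, vert (I + 1) K) = d'"
  proof (cases rule: darts_at_cases[OF d' v'])
    case (1 K')
    then show ?thesis using forward_dart_orbit by simp
  next
    case (2 K')
    obtain k where "(rot ^^ k) (vert I J, vert (I + 1) K) = (vert I J, vert (I + 1) (2 * J - K'))"
      using forward_dart_orbit by blast
    then have "(rot ^^ Suc k) (vert I J, vert (I + 1) K) = d'"
      using 2 by (simp add: rot_forward)
    then show ?thesis by blast
  qed
  then obtain k1 where "(rot ^^ k1) (vert I J, vert (I + 1) K) = d'" ..
  then have "(rot ^^ (k1 + k0)) d = d'" using k0 by (simp add: funpow_add)
  then show ?thesis by blast
qed

lemma bij_betw_rot: "bij_betw rot (darts n m) (darts n m)"
proof -
  have "darts n m \<subseteq> rot ` darts n m"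
  proof
    fix d assume d: "d \<in> darts n m"
    then obtain k where "(rot ^^ k) (rot d) = d"
      using rot_orbit rot_in_darts fst_rot by metis
    then have "d = rot ((rot ^^ k) d)" by (simp add: funpow_swap1)
    then show "d \<in> rot ` darts n m" using d funpow_rot_in_darts by blast
  qed
  moreover have "rot ` darts n m \<subseteq> darts n m" using rot_in_darts by blast
  ultimately show ?thesis
    using finite_surj_inj[OF finite_darts] by (auto simp: bij_betw_def)
qed

lemma rotation_system_rot: "rotation_system n m rot"
  unfolding rotation_system_def using bij_betw_rot fst_rot rot_orbit by blast

definition mod_compatible :: "(int \<Rightarrow> int) \<Rightarrow> bool" where
  "mod_compatible f \<longleftrightarrow> (\<forall>I I'. int n dvd I - I' \<longrightarrow> int m dvd f I - f I')"

lemma mod_compatible_div2_linear: "mod_compatible (\<lambda>I. t * (I div 2) + a * I + b)"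
proof (unfold mod_compatible_def, intro allI impI)
  fix I I' assume "int n dvd I - I'"
  then obtain q where q: "I - I' = int n * q" by (rule dvdE)
  obtain h where h: "int n = 2 * h" and "int m dvd h"
    using even_n m_dvd_half_n by (metis dvd_mult_div_cancel even_of_nat)
  from q h have I: "I = I' + 2 * (h * q)" by simp
  then have "I div 2 = I' div 2 + h * q" by simp
  with I have "t * (I div 2) + a * I + b - (t * (I' div 2) + a * I' + b) = h * (t * q + 2 * a * q)"
    by (simp add: algebra_simps)
  with \<open>int m dvd h\<close> show "int m dvd t * (I div 2) + a * I + b - (t * (I' div 2) + a * I' + b)"
    by simp
qed

lemma mod_compatible_fwd: "mod_compatible (\<lambda>I. I div 2 + a * I + b)"
  using mod_compatible_div2_linear[of 1] by simp

lemma mod_compatible_linear: "mod_compatible (\<lambda>I. a * I + b)"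
  using mod_compatible_div2_linear[of 0] by simp

definition walk :: "(int \<Rightarrow> int) \<Rightarrow> int \<Rightarrow> int \<Rightarrow> dart" where
  "walk f \<delta> I = (vert I (f I), vert (I + \<delta>) (f (I + \<delta>)))"

lemma walk_cong: "mod_compatible f \<Longrightarrow> int n dvd I - I' \<Longrightarrow> walk f \<delta> I = walk f \<delta> I'"
  by (simp add: walk_def mod_compatible_def vert_eq_iff)

lemma dvd_of_fst_walk_eq: "fst (walk f \<delta> I) = fst (walk f \<delta> I') \<Longrightarrow> int n dvd I - I'"
  by (simp add: walk_def vert_eq_iff)

lemma card_range_walk:
  assumes "mod_compatible f"
  shows "card (range (walk f \<delta>)) = n"
proof -
  have "range (walk f \<delta>) \<subseteq> walk f \<delta> ` {0..<int n}"
  proof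
    fix d assume "d \<in> range (walk f \<delta>)"
    then obtain I where "d = walk f \<delta> I" by auto
    moreover have "walk f \<delta> I = walk f \<delta> (I mod int n)"
      using assms mod_minus_self_dvd by (metis walk_cong)
    moreover have "I mod int n \<in> {0..<int n}" using n_pos by simp
    ultimately show "d \<in> walk f \<delta> ` {0..<int n}" by blast
  qed
  then have "range (walk f \<delta>) = walk f \<delta> ` {0..<int n}" by blast
  moreover have "inj_on (walk f \<delta>) {0..<int n}"
  proof
    fix I I' assume "I \<in> {0..<int n}" "I' \<in> {0..<int n}" "walk f \<delta> I = walk f \<delta> I'"
    then show "I = I'"
      using dvd_of_fst_walk_eq by (metis atLeastLessThan_iff mod_eq_dvd_iff mod_pos_pos_trivial)
  qed
  ultimately show ?thesis by (simp add: card_image)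
qed

lemma inj_on_fst_walk:
  assumes "mod_compatible f"
  shows "inj_on fst (range (walk f \<delta>))"
proof (rule inj_onI)
  fix d d' assume "d \<in> range (walk f \<delta>)" "d' \<in> range (walk f \<delta>)" "fst d = fst d'"
  then obtain I I' where "d = walk f \<delta> I" "d' = walk f \<delta> I'" and "int n dvd I - I'"
    using dvd_of_fst_walk_eq by blast
  then show "d = d'" using walk_cong[OF assms] by simp
qed

lemma rev_walk_notin_range:
  assumes "is_unit \<delta>"
  shows "rev_dart (walk f \<delta> I) \<notin> range (walk f \<delta>)"
proof
  assume "rev_dart (walk f \<delta> I) \<in> range (walk f \<delta>)"
  then obtain I' where "rev_dart (walk f \<delta> I) = walk f \<delta> I'" by auto
  then have "int n dvd I + \<delta> - I'" "int n dvd I - (I' + \<delta>)"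
    by (simp_all add: walk_def rev_dart_def vert_eq_iff)
  then have "int n dvd (I + \<delta> - I') - (I - (I' + \<delta>))"
    by (rule dvd_diff)
  then have "int n dvd 2 * \<delta>" by (simp add: algebra_simps)
  moreover have "\<delta> = 1 \<or> \<delta> = - 1"
    using assms by (cases "0 \<le> \<delta>") auto
  ultimately show False
    using not_n_dvd_2 by auto
qed

lemma funpow_phi_walk:
  assumes "\<And>I. phi rot (walk f \<delta> I) = walk f \<delta> (I + \<delta>)"
  shows "(phi rot ^^ k) (walk f \<delta> I) = walk f \<delta> (I + int k * \<delta>)"
  by (induction k) (simp_all add: assms algebra_simps)

lemma face_walk:
  assumes "mod_compatible f" and "is_unit \<delta>" and step: "\<And>I. phi rot (walk f \<delta> I) = walk f \<delta> (I + \<delta>)"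
  shows "face rot (walk f \<delta> I) = range (walk f \<delta>)"
proof
  show "face rot (walk f \<delta> I) \<subseteq> range (walk f \<delta>)"
    by (auto simp: face_def funpow_phi_walk[OF step])
  show "range (walk f \<delta>) \<subseteq> face rot (walk f \<delta> I)"
  proof
    fix d assume "d \<in> range (walk f \<delta>)"
    then obtain I' where d: "d = walk f \<delta> I'" by auto
    obtain k where "int n dvd I + int k * \<delta> - I'"
      using unit_steps_reach_mod[OF _ assms(2)] n_pos by (metis of_nat_0_less_iff)
    then have "d = (phi rot ^^ k) (walk f \<delta> I)"
      using d by (simp add: funpow_phi_walk[OF step] walk_cong[OF assms(1)])
    then show "d \<in> face rot (walk f \<delta> I)" by (auto simp: face_def)
  qed
qed

abbreviation fwd_walk :: "int \<Rightarrow> int \<Rightarrow> int \<Rightarrow> dart" where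
  "fwd_walk a b \<equiv> walk (\<lambda>I. I div 2 + a * I + b) 1"

abbreviation bwd_walk :: "int \<Rightarrow> int \<Rightarrow> int \<Rightarrow> dart" where
  "bwd_walk a b \<equiv> walk (\<lambda>I. a * I + b) (- 1)"

lemma phi_fwd_walk: "phi rot (fwd_walk a b I) = fwd_walk a b (I + 1)"
proof -
  define F where "F = (\<lambda>I::int. I div 2 + a * I + b)"
  have "phi rot (walk F 1 I) = rot (vert (I + 1) (F (I + 1)), vert I (F I))"
    by (simp add: walk_def phi_def rev_dart_def)
  also have "\<dots> = (vert (I + 1) (F (I + 1)), vert (I + 1 + 1) (2 * F (I + 1) + alt_sign (I + 1) - F I))"
    by (rule rot_backward) simp
  also have "2 * F (I + 1) + alt_sign (I + 1) - F I = F (I + 1 + 1)"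
    using second_difference_div2[of "I + 1"] by (simp add: F_def algebra_simps)
  finally show ?thesis
    by (simp add: walk_def F_def)
qed

lemma phi_bwd_walk: "phi rot (bwd_walk a b I) = bwd_walk a b (I - 1)"
  by (simp add: walk_def phi_def rev_dart_def rot_forward algebra_simps)

lemma face_fwd_walk: "face rot (fwd_walk a b I) = range (fwd_walk a b)"
  by (rule face_walk) (simp_all add: mod_compatible_fwd phi_fwd_walk)

lemma face_bwd_walk: "face rot (bwd_walk a b I) = range (bwd_walk a b)"
  by (rule face_walk) (simp_all add: mod_compatible_linear phi_bwd_walk)

lemma forward_dart_eq_fwd_walk:
  obtains a b where "(vert I J, vert (I + 1) K) = fwd_walk a b I"
proof
  define a where "a = K - J - ((I + 1) div 2 - I div 2)"
  show "(vert I J, vert (I + 1) K) = fwd_walk a (J - I div 2 - a * I) I"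
    by (simp add: walk_def a_def algebra_simps)
qed

lemma backward_dart_eq_bwd_walk:
  obtains a b where "(vert I J, vert (I - 1) K) = bwd_walk a b I"
proof
  show "(vert I J, vert (I - 1) K) = bwd_walk (J - K) (J - (J - K) * I) I"
    by (simp add: walk_def algebra_simps)
qed

lemma faces_cases:
  assumes "F \<in> faces n m rot"
  obtains a b where "F = range (fwd_walk a b)" | a b where "F = range (bwd_walk a b)"
proof -
  obtain d where d: "d \<in> darts n m" and F: "F = face rot d"
    using assms by (auto simp: faces_def)
  from d show ?thesis
  proof (cases rule: darts_cases)
    case (1 I J K)
    then obtain a b where "d = fwd_walk a b I" by (metis forward_dart_eq_fwd_walk)
    then show ?thesis using that(1) F by (simp add: face_fwd_walk)
  next
    case (2 I J K)
    then obtain a b where "d = bwd_walk a b I" by (metis backward_dart_eq_bwd_walk)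
    then show ?thesis using that(2) F by (simp add: face_bwd_walk)
  qed
qed

lemma range_bwd_walk_in_faces: "range (bwd_walk a b) \<in> faces n m rot"
proof -
  have "bwd_walk a b 0 \<in> darts n m"
    using backward_dart[of 0 b "b - a"] by (simp add: walk_def algebra_simps)
  then show ?thesis
    unfolding faces_def by (rule image_eqI[rotated]) (simp add: face_bwd_walk)
qed

lemma card_faces: "F \<in> faces n m rot \<Longrightarrow> card F = n"
  by (erule faces_cases) (simp_all add: card_range_walk mod_compatible_fwd mod_compatible_linear)

lemma polytopal_rot: "polytopal n m rot"
  unfolding polytopal_def
proof (intro conjI ballI)
  fix F assume F: "F \<in> faces n m rot"
  then show "inj_on fst F"
    by (cases rule: faces_cases) (simp_all add: inj_on_fst_walk mod_compatible_fwd mod_compatible_linear)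
  show "3 \<le> card F" using card_faces[OF F] n_ge_6 by simp
next
  fix d assume "d \<in> darts n m"
  moreover have "rev_dart d \<in> face rot (rev_dart d)"
    unfolding face_def by (auto intro: exI[of _ 0])
  ultimately show "face rot d \<noteq> face rot (rev_dart d)"
  proof (cases rule: darts_cases)
    case (1 I J K)
    then obtain a b where "d = fwd_walk a b I" by (metis forward_dart_eq_fwd_walk)
    then show ?thesis
      using rev_walk_notin_range[of 1 "\<lambda>I. I div 2 + a * I + b" I] \<open>rev_dart d \<in> _\<close>
      by (auto simp: face_fwd_walk)
  next
    case (2 I J K)
    then obtain a b where "d = bwd_walk a b I" by (metis backward_dart_eq_bwd_walk)
    then show ?thesis
      using rev_walk_notin_range[of "- 1" "\<lambda>I. a * I + b" I] \<open>rev_dart d \<in> _\<close>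
      by (auto simp: face_bwd_walk)
  qed
qed

lemma card_neighbours:
  assumes "x \<in> Vs n m"
  shows "card {y. adj n m x y} = 2 * m"
proof -
  obtain I J where x: "x = vert I J" using assms by (rule obtain_vert)
  have neighbours: "{y. adj n m x y} = range (vert (I + 1)) \<union> range (vert (I - 1))"
  proof (intro equalityI subsetI)
    fix y assume "y \<in> {y. adj n m x y}"
    then have "(vert I J, y) \<in> darts n m" by (simp add: x darts_def)
    then show "y \<in> range (vert (I + 1)) \<union> range (vert (I - 1))"
      by (cases rule: darts_at_cases) auto
  qed (auto simp: x adj_vert_iff)
  have card_layer: "card (range (vert X)) = m" for X
  proof -
    have "range (vert X) = vert X ` {0..<int m}"
    proof (intro equalityI subsetI)
      fix y assume "y \<in> range (vert X)"
      then obtain K where y: "y = vert X K" by auto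
      have "vert X K = vert X (K mod int m)"
        using mod_minus_self_dvd[of "int m" K] by (simp add: vert_eq_iff dvd_diff_commute)
      then show "y \<in> vert X ` {0..<int m}"
        using y m_pos by (auto intro!: image_eqI[where x = "K mod int m"])
    qed auto
    moreover have "inj_on (vert X) {0..<int m}"
      by (auto intro!: inj_onI simp: vert_eq_iff simp flip: mod_eq_dvd_iff)
    ultimately show ?thesis by (simp add: card_image)
  qed
  have finite_layer: "finite (range (vert X))" for X
    using card_layer[of X] m_pos by (intro card_ge_0_finite) simp
  have "range (vert (I + 1)) \<inter> range (vert (I - 1)) = {}"
    using not_n_dvd_2 by (auto simp: vert_eq_iff)
  then show ?thesis
    by (simp add: neighbours card_Un_disjoint card_layer finite_layer)
qed

lemma map_type_rot: "map_type n m rot n (2 * m)"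
  unfolding map_type_def using card_faces card_neighbours by blast

definition aff :: "int \<Rightarrow> int \<Rightarrow> int \<Rightarrow> int \<Rightarrow> int \<Rightarrow> int \<Rightarrow> vtx \<Rightarrow> vtx" where
  "aff e a s t \<alpha> \<beta> x = (if x \<in> Vs n m then
     vert (a + e * cyc_coord x) (s * fib_coord x + t * (cyc_coord x div 2) + \<alpha> * cyc_coord x + \<beta>)
   else x)"

lemma aff_vert: "aff e a s t \<alpha> \<beta> (vert I J) = vert (a + e * I) (s * J + t * (I div 2) + \<alpha> * I + \<beta>)"
proof -
  let ?I = "I mod int n" and ?J = "J mod int m"
  have I: "int n dvd ?I - I" and J: "int m dvd ?J - J"
    by (rule mod_minus_self_dvd)+
  have "aff e a s t \<alpha> \<beta> (vert I J) = vert (a + e * ?I) (s * ?J + t * (?I div 2) + \<alpha> * ?I + \<beta>)"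
    by (simp add: aff_def vert_in_Vs cyc_coord_vert fib_coord_vert)
  also have "\<dots> = vert (a + e * I) (s * J + t * (I div 2) + \<alpha> * I + \<beta>)"
  proof (rule vert_cong)
    show "int n dvd a + e * ?I - (a + e * I)"
      using dvd_mult[OF I, of e] by (metis add_diff_cancel_left right_diff_distrib)
    have compat: "int m dvd (t * (?I div 2) + \<alpha> * ?I + 0) - (t * (I div 2) + \<alpha> * I + 0)"
      using mod_compatible_div2_linear I by (simp only: mod_compatible_def)
    have split: "s * ?J + t * (?I div 2) + \<alpha> * ?I + \<beta> - (s * J + t * (I div 2) + \<alpha> * I + \<beta>)
        = s * (?J - J) + ((t * (?I div 2) + \<alpha> * ?I + 0) - (t * (I div 2) + \<alpha> * I + 0))"
      by (simp add: algebra_simps)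
    show "int m dvd s * ?J + t * (?I div 2) + \<alpha> * ?I + \<beta> - (s * J + t * (I div 2) + \<alpha> * I + \<beta>)"
      unfolding split by (rule dvd_add[OF dvd_mult[OF J] compat])
  qed
  finally show ?thesis .
qed

lemma aff_outside: "x \<notin> Vs n m \<Longrightarrow> aff e a s t \<alpha> \<beta> x = x"
  by (simp add: aff_def)

lemma aff_in_Vs: "x \<in> Vs n m \<Longrightarrow> aff e a s t \<alpha> \<beta> x \<in> Vs n m"
  by (simp add: aff_def vert_in_Vs)

lemma inj_on_aff:
  assumes "is_unit e" and "is_unit s"
  shows "inj_on (aff e a s t \<alpha> \<beta>) (Vs n m)"
proof (rule inj_onI)
  fix x y assume "x \<in> Vs n m" "y \<in> Vs n m" and eq: "aff e a s t \<alpha> \<beta> x = aff e a s t \<alpha> \<beta> y"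
  then obtain I J I' J' where x: "x = vert I J" and y: "y = vert I' J'"
    by (metis obtain_vert)
  from eq have "int n dvd e * (I - I')"
    by (simp add: x y aff_vert vert_eq_iff right_diff_distrib)
  then have "int n dvd I - I'" using assms(1) by (simp add: dvd_mult_unit_iff')
  then have y': "y = vert I J'" by (simp add: y vert_eq_iff dvd_diff_commute)
  from eq have "int m dvd s * (J - J')"
    by (simp add: x y' aff_vert vert_eq_iff right_diff_distrib)
  then have "int m dvd J - J'" using assms(2) by (simp add: dvd_mult_unit_iff')
  then show "x = y" by (simp add: x y' vert_eq_iff)
qed

lemma bij_betw_aff:
  assumes "is_unit e" and "is_unit s"
  shows "bij_betw (aff e a s t \<alpha> \<beta>) (Vs n m) (Vs n m)"
proof -
  have "aff e a s t \<alpha> \<beta> ` Vs n m \<subseteq> Vs n m" using aff_in_Vs by blast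
  with inj_on_aff[OF assms] show ?thesis
    by (simp add: bij_betw_def endo_inj_surj Vs_def)
qed

lemma adj_aff_iff:
  assumes "is_unit e"
  shows "adj n m x y \<longleftrightarrow> adj n m (aff e a s t \<alpha> \<beta> x) (aff e a s t \<alpha> \<beta> y)"
proof (cases "x \<in> Vs n m \<and> y \<in> Vs n m")
  case True
  then obtain I J I' J' where x: "x = vert I J" and y: "y = vert I' J'"
    by (metis obtain_vert)
  have "e = 1 \<or> e = - 1" using assms by (cases "0 \<le> e") auto
  then show ?thesis
  proof
    assume "e = - 1"
    have "int n dvd - (I' - I + 1) \<longleftrightarrow> int n dvd I' - I + 1"
      "int n dvd - (I' - I - 1) \<longleftrightarrow> int n dvd I' - I - 1"
      by (simp_all only: dvd_minus_iff)
    with \<open>e = - 1\<close> show ?thesis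
      by (auto simp: x y aff_vert adj_vert_iff algebra_simps)
  qed (simp add: x y aff_vert adj_vert_iff algebra_simps)
next
  case False
  then show ?thesis using aff_in_Vs aff_outside by (metis adj_def)
qed

lemma map_aut_aff:
  assumes "is_unit e" and "is_unit s"
    and "orient_pres n m rot (aff e a s t \<alpha> \<beta>) \<or> orient_rev n m rot (aff e a s t \<alpha> \<beta>)"
  shows "map_aut n m rot (aff e a s t \<alpha> \<beta>)"
  unfolding map_aut_def
proof (intro conjI)
  show "\<forall>x. x \<notin> Vs n m \<longrightarrow> aff e a s t \<alpha> \<beta> x = x"
    by (simp add: aff_outside)
  show "bij_betw (aff e a s t \<alpha> \<beta>) (Vs n m) (Vs n m)"
    by (rule bij_betw_aff[OF assms(1,2)])
  show "\<forall>x y. adj n m x y \<longleftrightarrow> adj n m (aff e a s t \<alpha> \<beta> x) (aff e a s t \<alpha> \<beta> y)"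
    using adj_aff_iff[OF assms(1)] by blast
qed (fact assms(3))

lemma orient_pres_aff_shift:
  assumes "odd a"
  shows "orient_pres n m rot (aff 1 a (- 1) 0 \<alpha> \<beta>)"
  unfolding orient_pres_def
proof
  fix d assume "d \<in> darts n m"
  then show "rot (gd (aff 1 a (- 1) 0 \<alpha> \<beta>) d) = gd (aff 1 a (- 1) 0 \<alpha> \<beta>) (rot d)"
    using assms
    by (cases rule: darts_cases)
      (simp_all add: gd_def aff_vert rot_forward rot_backward alt_sign_odd_add,
       simp_all add: algebra_simps)
qed

lemma orient_pres_aff_flip:
  assumes "even a"
  shows "orient_pres n m rot (aff (- 1) a (- 1) 1 \<alpha> \<beta>)"
  unfolding orient_pres_def
proof
  fix d assume "d \<in> darts n m"
  then show "rot (gd (aff (- 1) a (- 1) 1 \<alpha> \<beta>) d) = gd (aff (- 1) a (- 1) 1 \<alpha> \<beta>) (rot d)"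
    using assms
    by (cases rule: darts_cases)
      (simp_all add: gd_def aff_vert rot_forward rot_backward alt_sign_even_diff,
       simp_all add: second_difference_div2[symmetric] algebra_simps)
qed

lemma orient_rev_aff_flip: "orient_rev n m rot (aff (- 1) 0 1 0 \<alpha> \<beta>)"
  unfolding orient_rev_def
proof
  fix d assume "d \<in> darts n m"
  then show "rot (gd (aff (- 1) 0 1 0 \<alpha> \<beta>) (rot d)) = gd (aff (- 1) 0 1 0 \<alpha> \<beta>) d"
    by (cases rule: darts_cases)
      (simp_all add: gd_def aff_vert rot_forward rot_backward alt_sign_uminus,
       simp_all add: algebra_simps)
qed

lemma not_orient_pres_if_rev:
  assumes "map_aut n m rot g" and "orient_rev n m rot g"
  shows "\<not> orient_pres n m rot g"
proof
  assume pres: "orient_pres n m rot g"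
  define d where "d = (vert 0 0, vert (0 + 1) 0)"
  have d: "d \<in> darts n m" unfolding d_def by (rule forward_dart)
  have "gd g (rot (rot d)) = rot (gd g (rot d))"
    using pres rot_in_darts[OF d] by (simp add: orient_pres_def)
  also have "\<dots> = gd g d"
    using assms(2) d by (simp add: orient_rev_def)
  finally have "g (vert 1 (- 1)) = g (vert 1 0)"
    by (simp add: d_def gd_def rot_forward rot_backward alt_sign_def)
  moreover have "inj_on g (Vs n m)"
    using assms(1) by (simp add: map_aut_def bij_betw_def)
  ultimately have "vert 1 (- 1) = vert 1 0"
    by (auto dest: inj_onD intro: vert_in_Vs)
  then show False
    using m_ge_3 by (simp add: vert_eq_iff)
qed

(* A conjugate of eta2: its coefficients are forced by fixing vert I J and acting on the
   neighbours of vert I J as rot does. *)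
definition vertex_rot :: "int \<Rightarrow> int \<Rightarrow> vtx \<Rightarrow> vtx" where
  "vertex_rot I J =
     aff (- 1) (2 * I) (- 1) 1 (I div 2 - (I + 1) div 2) (2 * J - I div 2 - (I div 2 - (I + 1) div 2) * I)"

lemma map_aut_vertex_rot: "map_aut n m rot (vertex_rot I J)"
  unfolding vertex_rot_def by (rule map_aut_aff) (simp_all add: orient_pres_aff_flip)

lemma vertex_rot_fixes: "vertex_rot I J (vert I J) = vert I J"
  by (simp add: vertex_rot_def aff_vert algebra_simps)

lemma vertex_rot_acts:
  assumes "d \<in> darts n m" and "fst d = vert I J"
  shows "vertex_rot I J (snd d) = snd (rot d)"
  using assms
  by (cases rule: darts_at_cases)
    (simp_all add: vertex_rot_def aff_vert rot_forward rot_backward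
      second_difference_div2[symmetric] algebra_simps)

lemma funpow_rot_eq_action:
  assumes act: "\<And>d. d \<in> darts n m \<Longrightarrow> fst d = v \<Longrightarrow> g (snd d) = snd (rot d)"
    and vw: "(v, w) \<in> darts n m"
  shows "(rot ^^ k) (v, w) = (v, (g ^^ k) w)"
proof (induction k)
  case (Suc k)
  have "(v, (g ^^ k) w) \<in> darts n m"
    using Suc funpow_rot_in_darts[OF vw] by metis
  then have "rot (v, (g ^^ k) w) = (v, g ((g ^^ k) w))"
    using act fst_rot by (metis fst_conv snd_conv prod.collapse)
  with Suc show ?case by simp
qed simp

lemma vertex_rotary:
  assumes "v \<in> Vs n m"
  shows "\<exists>g. map_aut n m rot g \<and> g v = v \<and>
    (\<forall>w w'. adj n m v w \<longrightarrow> adj n m v w' \<longrightarrow> (\<exists>k. (g ^^ k) w = w'))"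
proof -
  obtain I J where v: "v = vert I J" using assms by (rule obtain_vert)
  have "\<exists>k. (vertex_rot I J ^^ k) w = w'" if "adj n m v w" "adj n m v w'" for w w'
  proof -
    from that have vw: "(v, w) \<in> darts n m" and vw': "(v, w') \<in> darts n m"
      by (simp_all add: darts_def)
    then obtain k where "(rot ^^ k) (v, w) = (v, w')"
      using rot_orbit by fastforce
    moreover have "(rot ^^ k) (v, w) = (v, (vertex_rot I J ^^ k) w)"
      using vertex_rot_acts v vw by (intro funpow_rot_eq_action) auto
    ultimately show ?thesis by auto
  qed
  then show ?thesis
    using map_aut_vertex_rot vertex_rot_fixes v by blast
qed

lemma funpow_gd_walk:
  assumes step: "\<And>I. gd g (walk f \<delta> I) = walk f \<delta> (I + \<nu>)"
  shows "gd (g ^^ k) (walk f \<delta> I) = walk f \<delta> (I + int k * \<nu>)"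
proof (induction k)
  case (Suc k)
  have "gd (g ^^ Suc k) (walk f \<delta> I) = gd g (gd (g ^^ k) (walk f \<delta> I))"
    by (simp add: gd_def)
  also have "\<dots> = walk f \<delta> (I + int k * \<nu> + \<nu>)"
    by (simp only: Suc step)
  also have "I + int k * \<nu> + \<nu> = I + int (Suc k) * \<nu>"
    by (simp add: algebra_simps)
  finally show ?case .
qed (simp add: gd_def)

lemma face_rotation:
  assumes "mod_compatible f" and "map_aut n m rot g" and "orient_pres n m rot g" and "is_unit \<nu>"
    and step: "\<And>I. gd g (walk f \<delta> I) = walk f \<delta> (I + \<nu>)"
  shows "face_image n m rot g (range (walk f \<delta>)) = range (walk f \<delta>) \<and>
    (\<forall>x\<in>fst ` range (walk f \<delta>). \<forall>y\<in>fst ` range (walk f \<delta>). \<exists>k. (g ^^ k) x = y) \<and>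
    (\<forall>d\<in>range (walk f \<delta>). \<forall>d'\<in>range (walk f \<delta>).
       \<exists>k. {(g ^^ k) (fst d), (g ^^ k) (snd d)} = {fst d', snd d'})"
proof -
  note funpow = funpow_gd_walk[of g, OF step]
  have reach: "\<exists>k. gd (g ^^ k) (walk f \<delta> I) = walk f \<delta> I'" for I I'
  proof -
    obtain k where "int n dvd I + int k * \<nu> - I'"
      using unit_steps_reach_mod[OF _ assms(4)] n_pos by (metis of_nat_0_less_iff)
    then show ?thesis
      using funpow walk_cong[OF assms(1)] by metis
  qed
  have "gd g ` range (walk f \<delta>) = range (walk f \<delta>)"
  proof (intro equalityI subsetI)
    fix d assume "d \<in> range (walk f \<delta>)"
    then obtain I where "d = walk f \<delta> I" by auto
    then have "d = gd g (walk f \<delta> (I - \<nu>))" by (simp add: step)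
    then show "d \<in> gd g ` range (walk f \<delta>)" by blast
  qed (auto simp: step)
  then have "face_image n m rot g (range (walk f \<delta>)) = range (walk f \<delta>)"
    using assms(3) by (simp add: face_image_def)
  moreover have orbit: "\<exists>k. (g ^^ k) (fst (walk f \<delta> I)) = fst (walk f \<delta> I') \<and>
      (g ^^ k) (snd (walk f \<delta> I)) = snd (walk f \<delta> I')" for I I'
    using reach[of I I'] by (metis gd_def fst_conv snd_conv)
  moreover have "\<forall>x\<in>fst ` range (walk f \<delta>). \<forall>y\<in>fst ` range (walk f \<delta>). \<exists>k. (g ^^ k) x = y"
    using orbit by blast
  moreover have "\<forall>d\<in>range (walk f \<delta>). \<forall>d'\<in>range (walk f \<delta>).
      \<exists>k. {(g ^^ k) (fst d), (g ^^ k) (snd d)} = {fst d', snd d'}"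
  proof (intro ballI)
    fix d d' assume "d \<in> range (walk f \<delta>)" "d' \<in> range (walk f \<delta>)"
    then obtain I I' where "d = walk f \<delta> I" "d' = walk f \<delta> I'" by auto
    with orbit[of I I'] show "\<exists>k. {(g ^^ k) (fst d), (g ^^ k) (snd d)} = {fst d', snd d'}"
      by metis
  qed
  ultimately show ?thesis
    by blast
qed

lemma face_reflection:
  assumes "map_aut n m rot g" and "orient_rev n m rot g"
    and step: "\<And>I. rev_dart (gd g (walk f \<delta> I)) = walk f \<delta> (c - I)"
  shows "face_image n m rot g (range (walk f \<delta>)) = range (walk f \<delta>) \<and>
    (\<forall>d\<in>range (walk f \<delta>). rev_dart (gd g d) \<in> range (walk f \<delta>))"
proof -
  have "rev_dart ` gd g ` range (walk f \<delta>) = range (walk f \<delta>)"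
  proof (intro equalityI subsetI)
    fix d assume "d \<in> range (walk f \<delta>)"
    then obtain I where "d = walk f \<delta> I" by auto
    then have "d = rev_dart (gd g (walk f \<delta> (c - I)))" by (simp add: step)
    then show "d \<in> rev_dart ` gd g ` range (walk f \<delta>)" by blast
  qed (auto simp: step)
  moreover have "\<not> orient_pres n m rot g"
    using assms(1,2) by (rule not_orient_pres_if_rev)
  ultimately show ?thesis
    by (auto simp: face_image_def step)
qed

lemma face_rotary:
  assumes "F \<in> faces n m rot"
  shows "\<exists>g. map_aut n m rot g \<and> face_image n m rot g F = F \<and>
    (\<forall>x\<in>fst ` F. \<forall>y\<in>fst ` F. \<exists>k. (g ^^ k) x = y) \<and>
    (\<forall>d\<in>F. \<forall>d'\<in>F. \<exists>k. {(g ^^ k) (fst d), (g ^^ k) (snd d)} = {fst d', snd d'})"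
  using assms
proof (cases rule: faces_cases)
  case (1 a b)
  let ?g = "aff 1 1 (- 1) 0 (1 + 2 * a) (a + 2 * b)"
  have aut: "map_aut n m rot ?g" and pres: "orient_pres n m rot ?g"
    by (simp_all add: map_aut_aff orient_pres_aff_shift)
  have step: "gd ?g (fwd_walk a b I) = fwd_walk a b (I + 1)" for I
    using div2_add_succ_div2[of I] div2_add_succ_div2[of "I + 1"]
    by (simp add: gd_def walk_def aff_vert algebra_simps) (intro conjI arg_cong2[where f = vert]; linarith)
  have "is_unit (1::int)" by simp
  from face_rotation[OF mod_compatible_fwd aut pres this step] aut show ?thesis
    unfolding 1 by blast
next
  case (2 a b)
  let ?g = "aff 1 (- 1) (- 1) 0 (2 * a) (2 * b - a)"
  have aut: "map_aut n m rot ?g" and pres: "orient_pres n m rot ?g"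
    by (simp_all add: map_aut_aff orient_pres_aff_shift)
  have step: "gd ?g (bwd_walk a b I) = bwd_walk a b (I + - 1)" for I
    by (simp add: gd_def walk_def aff_vert algebra_simps)
  have "is_unit (- 1::int)" by simp
  from face_rotation[OF mod_compatible_linear aut pres this step] aut show ?thesis
    unfolding 2 by blast
qed

lemma face_reflexible:
  assumes "F \<in> faces n m rot"
  shows "\<exists>g. map_aut n m rot g \<and> face_image n m rot g F = F \<and> (\<forall>d\<in>F. rev_dart (gd g d) \<in> F)"
  using assms
proof (cases rule: faces_cases)
  case (1 a b)
  let ?g = "aff (- 1) 0 1 0 (- 1 - 2 * a) 0"
  have aut: "map_aut n m rot ?g" and rev: "orient_rev n m rot ?g"
    by (simp_all add: map_aut_aff orient_rev_aff_flip)
  have step: "rev_dart (gd ?g (fwd_walk a b I)) = fwd_walk a b (- 1 - I)" for I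
    using uminus_div2[of I] uminus_div2[of "I + 1"]
    by (simp add: gd_def walk_def rev_dart_def aff_vert algebra_simps)
      (intro conjI arg_cong2[where f = vert]; linarith)
  from face_reflection[OF aut rev step] aut show ?thesis
    unfolding 1 by blast
next
  case (2 a b)
  let ?g = "aff (- 1) 0 1 0 (- 2 * a) 0"
  have aut: "map_aut n m rot ?g" and rev: "orient_rev n m rot ?g"
    by (simp_all add: map_aut_aff orient_rev_aff_flip)
  have step: "rev_dart (gd ?g (bwd_walk a b I)) = bwd_walk a b (1 - I)" for I
    by (simp add: gd_def walk_def rev_dart_def aff_vert algebra_simps)
  from face_reflection[OF aut rev step] aut show ?thesis
    unfolding 2 by blast
qed

lemma reflexible_rot: "reflexible n m rot"
  unfolding reflexible_def rotary_def
  by (intro conjI ballI vertex_rotary face_rotary face_reflexible)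

lemma funpow_cperm: "(cperm m ^^ k) (nat (X mod int m) + 1) = nat ((X + int k) mod int m) + 1"
proof (induction k)
  case (Suc k)
  have "int ((nat ((X + int k) mod int m) + 1) mod m) = ((X + int k) mod int m + 1) mod int m"
    using m_pos by (simp add: zmod_int add.commute)
  also have "\<dots> = (X + int (Suc k)) mod int m"
    by (simp add: mod_simps algebra_simps)
  finally have "cperm m (nat ((X + int k) mod int m) + 1) = nat ((X + int (Suc k)) mod int m) + 1"
    using m_pos by (simp add: cperm_def nat_eq_iff)
  then show ?case using Suc by simp
qed simp

lemma eta1_eq_aff: "eta1 n m = aff 1 1 (- 1) 0 0 0"
proof
  fix x
  show "eta1 n m x = aff 1 1 (- 1) 0 0 0 x"
  proof (cases "x \<in> Vs n m")
    case True
    then obtain i j where x: "x = (i, j)" and ij: "1 \<le> i" "i \<le> n" "1 \<le> j" "j \<le> m"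
      by (auto simp: Vs_def)
    have "aff 1 1 (- 1) 0 0 0 x = vert (int i) (1 - int j)"
      using True by (simp add: aff_def x cyc_coord_def fib_coord_def)
    also have "\<dots> = (rperm n i, tperm m j)"
      using reflection_perm_eq_mod[of j m] ij by (simp add: vert_def rperm_def tperm_def flip: zmod_int)
    finally show ?thesis
      using True by (simp add: eta1_def x)
  qed (simp add: eta1_def aff_def)
qed

lemma eta2_eq_aff: "eta2 n m = aff (- 1) 0 (- 1) 1 0 0"
proof
  fix x
  show "eta2 n m x = aff (- 1) 0 (- 1) 1 0 0 x"
  proof (cases "x \<in> Vs n m")
    case True
    then obtain i j where x: "x = (i, j)" and ij: "1 \<le> i" "i \<le> n" "1 \<le> j" "j \<le> m"
      by (auto simp: Vs_def)
    have half: "int ((i - 1) div 2) = (int i - 1) div 2"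
      using ij by (simp add: of_nat_div)
    have "aff (- 1) 0 (- 1) 1 0 0 x = vert (1 - int i) (1 - int j + (int i - 1) div 2)"
      using True by (simp add: aff_def x cyc_coord_def fib_coord_def)
    also have "\<dots> = (zperm n i, gamma m i j)"
    proof -
      have "gamma m i j = (cperm m ^^ ((i - 1) div 2)) (nat ((1 - int j) mod int m) + 1)"
        using reflection_perm_eq_mod[of j m] ij by (simp add: gamma_def tperm_def)
      also have "\<dots> = nat ((1 - int j + (int i - 1) div 2) mod int m) + 1"
        unfolding funpow_cperm half ..
      finally show ?thesis
        using reflection_perm_eq_mod[of i n] ij by (simp add: vert_def zperm_def)
    qed
    finally show ?thesis
      using True by (simp add: eta2_def x)
  qed (simp add: eta2_def aff_def)
qed

lemma flag_at_origin: "is_flag n m rot (vert 0 0) (vert (- 1) 0) (range (bwd_walk 0 0))"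
  unfolding is_flag_def
proof (intro conjI disjI1)
  show "adj n m (vert 0 0) (vert (- 1) 0)"
    by (simp add: adj_vert_iff)
  show "(vert 0 0, vert (- 1) 0) \<in> range (bwd_walk 0 0)"
    by (rule range_eqI[of _ _ 0]) (simp add: walk_def)
qed (rule range_bwd_walk_in_faces)

lemma eta2_comp_eta1_involution: "(eta2 n m \<circ> eta1 n m) ((eta2 n m \<circ> eta1 n m) x) = x"
proof (cases "x \<in> Vs n m")
  case True
  then obtain I J where x: "x = vert I J" by (rule obtain_vert)
  show ?thesis
    using uminus_div2[of I] div2_add_succ_div2[of I]
    by (simp add: x eta1_eq_aff eta2_eq_aff aff_vert algebra_simps)
      (intro arg_cong2[where f = vert]; linarith)
qed (simp add: eta1_eq_aff eta2_eq_aff aff_outside)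

lemma eta_distinguished:
  "distinguished n m rot (vert 0 0) (vert (- 1) 0) (range (bwd_walk 0 0)) (eta1 n m) (eta2 n m)"
proof -
  have aut1: "map_aut n m rot (eta1 n m)" and pres1: "orient_pres n m rot (eta1 n m)"
    by (simp_all add: eta1_eq_aff map_aut_aff orient_pres_aff_shift)
  have aut2: "map_aut n m rot (eta2 n m)"
    by (simp add: eta2_eq_aff map_aut_aff orient_pres_aff_flip)
  have step: "gd (eta1 n m) (bwd_walk 0 0 I) = bwd_walk 0 0 (I + 1)" for I
    by (simp add: eta1_eq_aff gd_def walk_def aff_vert algebra_simps)
  have "is_unit (1::int)" by simp
  from face_rotation[OF mod_compatible_linear aut1 pres1 this step]
  have face: "face_image n m rot (eta1 n m) (range (bwd_walk 0 0)) = range (bwd_walk 0 0)"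
    by blast
  have steps_back: "\<forall>d\<in>range (bwd_walk 0 0). eta1 n m (fst (phi rot d)) = fst d"
  proof
    fix d assume "d \<in> range (bwd_walk 0 0)"
    then obtain I where d: "d = bwd_walk 0 0 I" by auto
    show "eta1 n m (fst (phi rot d)) = fst d"
      unfolding d phi_bwd_walk by (simp add: eta1_eq_aff walk_def aff_vert)
  qed
  have origin_fixed: "eta2 n m (vert 0 0) = vert 0 0"
    by (simp add: eta2_eq_aff aff_vert)
  have "eta2 n m = vertex_rot 0 0"
    by (simp add: eta2_eq_aff vertex_rot_def)
  then have act: "\<forall>d\<in>darts n m. fst d = vert 0 0 \<longrightarrow> eta2 n m (snd d) = snd (rot d)"
    by (simp add: vertex_rot_acts)
  have swap: "(eta2 n m \<circ> eta1 n m) (vert 0 0) = vert (- 1) 0"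
    "(eta2 n m \<circ> eta1 n m) (vert (- 1) 0) = vert 0 0"
    by (simp_all add: eta1_eq_aff eta2_eq_aff aff_vert)
  show ?thesis
    unfolding distinguished_def
    using aut1 aut2 face steps_back origin_fixed act swap eta2_comp_eta1_involution by blast
qed

theorem map_with_distinguished_eta:
  "rotation_system n m rot \<and> polytopal n m rot \<and> reflexible n m rot \<and> map_type n m rot n (2 * m) \<and>
   (\<exists>v w F s1 s2. is_flag n m rot v w F \<and> distinguished n m rot v w F s1 s2 \<and>
      gen_grp {s1, s2} = gen_grp {eta1 n m, eta2 n m})"
  using rotation_system_rot polytopal_rot reflexible_rot map_type_rot flag_at_origin eta_distinguished
  by blast

end

theorem proposition5p7:
  fixes s m n :: nat
  assumes "odd m" and "m \<ge> 3" and "even s" and "\<not> 4 dvd s" and "s \<ge> 2" and "n = s * m"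
  shows "\<exists>rho. rotation_system n m rho \<and> polytopal n m rho \<and> reflexible n m rho \<and>
           map_type n m rho n (2 * m) \<and>
           (\<exists>v w F s1 s2. is_flag n m rho v w F \<and> distinguished n m rho v w F s1 s2 \<and>
              gen_grp {s1, s2} = gen_grp {eta1 n m, eta2 n m})"
proof -
  (* The construction only needs m >= 3 and 2 m dvd n. *)
  have "lex_cycle n m"
  proof
    show "3 \<le> m" by fact
    show "0 < n" using assms(2,5,6) by simp
    show "2 * m dvd n" using assms(3,6) by auto
  qed
  then show ?thesis
    using lex_cycle.map_with_distinguished_eta by blast
qed

end
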